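(* Assume that in the extended Kalman filter all matrices $P_{t|t-1}$ and $R_t$ are invertible. Then the extended Kalman filter is equivalent to the recursion $$s_{t|t-1}\leftarrow f(s_{t-1},u_t),\quad F_{t-1}\leftarrow\frac{\partial f}{\partial s}\Big|_{(s_{t-1},u_t)},\quad P_{t|t-1}\leftarrow F_{t-1}P_{t-1}F_{t-1}^\top+Q_t,\quad \hat y_t\leftarrow h(s_{t|t-1},u_t),$$ $$P_t^{-1}\leftarrow P_{t|t-1}^{-1}+\mathbb E_{y\sim p_{\mathrm{obs}}(\cdot\mid\hat y_t)}\Big[\Big(\frac{\partial\ln p_{\mathrm{obs}}(y\mid\hat y_t)}{\partial s_{t|t-1}}\Big)^{\otimes2}\Big],\qquad s_t\leftarrow s_{t|t-1}+P_t\Big(\frac{\partial\ln p_{\mathrm{obs}}(y_t\mid\hat y_t)}{\partial s_{t|t-1}}\Big)^\top,$$ where derivatives with respect to $s_{t|t-1}$ are derivatives of $s\mapsto\ln p_{\mathrm{obs}}(y\mid h(s,u_t))$ at $s=s_{t|t-1}$.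
   Context: Conventions: Jacobian $\partial y/\partial x$ has $(i,j)$ entry $\partial f_i/\partial x_j$; gradients of real functions are row vectors; for a row vector $v$, $v^{\otimes2}=v^\top v$. Exponential family: $p_{\mathrm{obs}}(y\mid\hat y)$ denotes a family of densities $\frac{1}{Z(\beta)}\exp(\sum_k\beta_kT_k(y))\lambda(dy)$ (reference measure $\lambda$, linearly independent sufficient statistics $T$), parameterized by its mean parameter $\hat y=\mathbb{E}[T(y)]$. Dynamical system model: smooth $f,h$, inputs $u_t$, observations $y_t$, process noise covariances $Q_t$. Extended Kalman filter: maintains $s_t$ and covariance $P_t$, starting from $(s_0,P_0)$; for $t\ge1$: $s_{t|t-1}=f(s_{t-1},u_t)$, $F_{t-1}=\partial f/\partial s|_{(s_{t-1},u_t)}$, $P_{t|t-1}=F_{t-1}P_{t-1}F_{t-1}^\top+Q_t$, $\hat y_t=h(s_{t|t-1},u_t)$, $E_t=T(y_t)-\hat y_t$, $R_t=\mathrm{Cov}_{y\sim p_{\mathrm{obs}}(\cdot\mid\hat y_t)}(T(y))$, $H_t=\partial h/\partial s|_{(s_{t|t-1},u_t)}$, $K_t=P_{t|t-1}H_t^\top(H_tP_{t|t-1}H_t^\top+R_t)^{-1}$, $P_t=(\mathrm{Id}-K_tH_t)P_{t|t-1}$, $s_t=s_{t|t-1}+K_tE_t$. *)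

theory Defs
  imports "HOL-Analysis.Analysis"
begin

definition ef_natparams :: "('y \<Rightarrow> real^'m) \<Rightarrow> 'y measure \<Rightarrow> (real^'m) set" where
  "ef_natparams T lam = {\<beta>. integrable lam (\<lambda>y. exp (\<beta> \<bullet> T y))}"

definition ef_Z :: "('y \<Rightarrow> real^'m) \<Rightarrow> 'y measure \<Rightarrow> real^'m \<Rightarrow> real" where
  "ef_Z T lam \<beta> = (\<integral>y. exp (\<beta> \<bullet> T y) \<partial>lam)"

definition ef_dens :: "('y \<Rightarrow> real^'m) \<Rightarrow> 'y measure \<Rightarrow> real^'m \<Rightarrow> 'y \<Rightarrow> real" where
  "ef_dens T lam \<beta> y = exp (\<beta> \<bullet> T y) / ef_Z T lam \<beta>"

definition ef_mean :: "('y \<Rightarrow> real^'m) \<Rightarrow> 'y measure \<Rightarrow> real^'m \<Rightarrow> real^'m" where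
  "ef_mean T lam \<beta> = (\<integral>y. ef_dens T lam \<beta> y *\<^sub>R T y \<partial>lam)"

definition ef_meanparams :: "('y \<Rightarrow> real^'m) \<Rightarrow> 'y measure \<Rightarrow> (real^'m) set" where
  "ef_meanparams T lam = ef_mean T lam ` ef_natparams T lam"

definition ef_natparam_of :: "('y \<Rightarrow> real^'m) \<Rightarrow> 'y measure \<Rightarrow> real^'m \<Rightarrow> real^'m" where
  "ef_natparam_of T lam yh = (THE \<beta>. \<beta> \<in> ef_natparams T lam \<and> ef_mean T lam \<beta> = yh)"

definition p_obs :: "('y \<Rightarrow> real^'m) \<Rightarrow> 'y measure \<Rightarrow> 'y \<Rightarrow> real^'m \<Rightarrow> real" where
  "p_obs T lam y yh = ef_dens T lam (ef_natparam_of T lam yh) y"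

definition ef_cov :: "('y \<Rightarrow> real^'m) \<Rightarrow> 'y measure \<Rightarrow> real^'m \<Rightarrow> real^'m^'m" where
  "ef_cov T lam yh = (\<chi> i j. \<integral>y. p_obs T lam y yh * ((T y $ i - yh $ i) * (T y $ j - yh $ j)) \<partial>lam)"

definition lin_indep_stats :: "('y \<Rightarrow> real^'m) \<Rightarrow> 'y measure \<Rightarrow> bool" where
  "lin_indep_stats T lam = (\<forall>c. c \<noteq> 0 \<longrightarrow> \<not> (\<exists>k. AE y in lam. c \<bullet> T y = k))"

definition exp_family :: "('y \<Rightarrow> real^'m) \<Rightarrow> 'y measure \<Rightarrow> bool" where
  "exp_family T lam = (T \<in> borel_measurable lam \<and> lin_indep_stats T lam \<and> open (ef_natparams T lam))"

text \<open>Jacobian: (i,j) entry is d g_i / d x_j.\<close>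
definition jacobian :: "(real^'n \<Rightarrow> real^'k) \<Rightarrow> real^'n \<Rightarrow> real^'n^'k" where
  "jacobian g x = matrix (frechet_derivative g (at x))"

text \<open>Gradient of a real function (a row vector, stored as a vector).\<close>
definition grad :: "(real^'n \<Rightarrow> real) \<Rightarrow> real^'n \<Rightarrow> real^'n" where
  "grad g x = (\<chi> j. frechet_derivative g (at x) (axis j 1))"

text \<open>v^{(x)2} = v^T v for a row vector v.\<close>
definition outer_sq :: "real^'n \<Rightarrow> real^'n^'n" where
  "outer_sq v = (\<chi> i j. v $ i * v $ j)"

definition psd_cov :: "real^'n^'n \<Rightarrow> bool" where
  "psd_cov A = (transpose A = A \<and> (\<forall>x. 0 \<le> x \<bullet> (A *v x)))"

definition ekf_pred_state :: "(real^'n \<Rightarrow> 'u \<Rightarrow> real^'n) \<Rightarrow> (nat \<Rightarrow> 'u) \<Rightarrow> real^'n \<Rightarrow> nat \<Rightarrow> real^'n" where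
  "ekf_pred_state f u s t = f s (u t)"

definition ekf_pred_cov :: "(real^'n \<Rightarrow> 'u \<Rightarrow> real^'n) \<Rightarrow> (nat \<Rightarrow> real^'n^'n) \<Rightarrow> (nat \<Rightarrow> 'u)
    \<Rightarrow> real^'n \<Rightarrow> real^'n^'n \<Rightarrow> nat \<Rightarrow> real^'n^'n" where
  "ekf_pred_cov f Q u s P t =
     (let F = jacobian (\<lambda>x. f x (u t)) s in F ** P ** transpose F + Q t)"

definition ekf_yhat :: "(real^'n \<Rightarrow> 'u \<Rightarrow> real^'n) \<Rightarrow> (real^'n \<Rightarrow> 'u \<Rightarrow> real^'m) \<Rightarrow> (nat \<Rightarrow> 'u)
    \<Rightarrow> real^'n \<Rightarrow> nat \<Rightarrow> real^'m" where
  "ekf_yhat f h u s t = h (ekf_pred_state f u s t) (u t)"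

fun ekf :: "(real^'n \<Rightarrow> 'u \<Rightarrow> real^'n) \<Rightarrow> (real^'n \<Rightarrow> 'u \<Rightarrow> real^'m) \<Rightarrow> ('y \<Rightarrow> real^'m)
    \<Rightarrow> 'y measure \<Rightarrow> (nat \<Rightarrow> real^'n^'n) \<Rightarrow> (nat \<Rightarrow> 'u) \<Rightarrow> (nat \<Rightarrow> 'y)
    \<Rightarrow> real^'n \<Rightarrow> real^'n^'n \<Rightarrow> nat \<Rightarrow> (real^'n) \<times> (real^'n^'n)" where
  "ekf f h T lam Q u y s0 P0 0 = (s0, P0)"
| "ekf f h T lam Q u y s0 P0 (Suc t) =
     (let (s, P) = ekf f h T lam Q u y s0 P0 t;
          sp = ekf_pred_state f u s (Suc t);
          Pp = ekf_pred_cov f Q u s P (Suc t);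
          yh = h sp (u (Suc t));
          E = T (y (Suc t)) - yh;
          R = ef_cov T lam yh;
          H = jacobian (\<lambda>x. h x (u (Suc t))) sp;
          K = Pp ** transpose H ** matrix_inv (H ** Pp ** transpose H + R);
          P' = (mat 1 - K ** H) ** Pp
      in (sp + K *v E, P'))"

fun ekf_alt :: "(real^'n \<Rightarrow> 'u \<Rightarrow> real^'n) \<Rightarrow> (real^'n \<Rightarrow> 'u \<Rightarrow> real^'m) \<Rightarrow> ('y \<Rightarrow> real^'m)
    \<Rightarrow> 'y measure \<Rightarrow> (nat \<Rightarrow> real^'n^'n) \<Rightarrow> (nat \<Rightarrow> 'u) \<Rightarrow> (nat \<Rightarrow> 'y)
    \<Rightarrow> real^'n \<Rightarrow> real^'n^'n \<Rightarrow> nat \<Rightarrow> (real^'n) \<times> (real^'n^'n)" where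
  "ekf_alt f h T lam Q u y s0 P0 0 = (s0, P0)"
| "ekf_alt f h T lam Q u y s0 P0 (Suc t) =
     (let (s, P) = ekf_alt f h T lam Q u y s0 P0 t;
          sp = ekf_pred_state f u s (Suc t);
          Pp = ekf_pred_cov f Q u s P (Suc t);
          yh = h sp (u (Suc t));
          ll = (\<lambda>y' x. ln (p_obs T lam y' (h x (u (Suc t)))));
          G = (\<chi> i j. \<integral>y'. p_obs T lam y' yh * (outer_sq (grad (ll y') sp) $ i $ j) \<partial>lam);
          Pinv = matrix_inv Pp + G;
          P' = matrix_inv Pinv
      in (sp + P' *v grad (ll (y (Suc t))) sp, P'))"

end

theory Submission
  imports Defs
begin

text \<open>
  In the mean parameterisation the natural parameter is the inverse of the mean map
  \<open>\<beta> \<mapsto> E\<^sub>\<beta>[T]\<close>, whose derivative is the covariance \<open>R\<close> of \<open>T\<close>. Hence the score of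
  \<open>p\<^sub>o\<^sub>b\<^sub>s(y | y\<^sub>h)\<close> with respect to the mean parameter is \<open>(T y - y\<^sub>h)\<^sup>T R\<^sup>-\<^sup>1\<close>; by the chain rule
  the score with respect to the state is \<open>(T y - y\<^sub>h)\<^sup>T R\<^sup>-\<^sup>1 H\<close>, and its Fisher information is
  \<open>H\<^sup>T R\<^sup>-\<^sup>1 H\<close>. The alternative recursion is therefore the information form of the Kalman
  update, which agrees with the gain form because \<open>(P\<^sup>-\<^sup>1 + H\<^sup>T R\<^sup>-\<^sup>1 H)\<^sup>-\<^sup>1 = (I - K H) P\<close> and
  \<open>K = (I - K H) P H\<^sup>T R\<^sup>-\<^sup>1\<close>.

  The analytic input is that \<open>T\<close> has exponential moments near every point of the open
  natural parameter space, so that integrals of polynomially growing functions of \<open>T\<close> may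
  be differentiated under the integral sign. Linear independence of the statistics makes
  \<open>R\<close> positive definite, which yields both the invertibility of \<open>R\<close> and, along segments
  of the convex natural parameter space, the injectivity of the mean map.
\<close>

lemma abs_exp_minus_one_minus_le: "\<bar>exp (x::real) - 1 - x\<bar> \<le> x\<^sup>2 * exp \<bar>x\<bar>"
proof -
  obtain t where t: "\<bar>t\<bar> \<le> \<bar>x\<bar>" "exp x = (\<Sum>m<2. x^m / fact m) + exp t / fact 2 * x^2"
    using Maclaurin_exp_le[of x 2] by blast
  have "\<bar>exp x - 1 - x\<bar> = exp t / 2 * x^2"
    using t(2) by (simp add: numeral_2_eq_2)
  also have "\<dots> \<le> exp \<bar>x\<bar> * x^2"
  proof (rule mult_right_mono)
    have "exp t \<le> exp \<bar>x\<bar>" using t(1) by (auto dest: abs_le_D1)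
    then show "exp t / 2 \<le> exp \<bar>x\<bar>" using exp_gt_zero[of t] by linarith
  qed simp
  finally show ?thesis by (simp add: mult.commute)
qed

lemma abs_exp_inner_taylor_le:
  fixes h x :: "'a::real_inner"
  assumes "norm h \<le> r"
  shows "\<bar>exp (h \<bullet> x) - 1 - h \<bullet> x\<bar> \<le> norm h^2 * norm x^2 * exp (r * norm x)"
proof -
  have cs: "\<bar>h \<bullet> x\<bar> \<le> norm h * norm x" by (rule Cauchy_Schwarz_ineq2)
  have "(h \<bullet> x)^2 \<le> norm h^2 * norm x^2"
    using power_mono[OF cs, of 2] by (simp add: power_mult_distrib)
  moreover have "exp \<bar>h \<bullet> x\<bar> \<le> exp (r * norm x)"
    using cs assms by (simp add: mult_right_mono order_trans)
  ultimately show ?thesis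
    using abs_exp_minus_one_minus_le[of "h \<bullet> x"] by (meson exp_ge_zero mult_mono order_trans zero_le_power2)
qed

lemma norm_exp_inner_remainder_le:
  fixes g :: "real^'m \<Rightarrow> 'b::real_normed_vector"
  assumes h: "norm h \<le> r" and c: "c \<ge> 0" "\<And>x. norm (g x) \<le> c * (1 + norm x)^k"
  shows "norm ((exp (\<beta> \<bullet> x) * (exp (h \<bullet> x) - 1 - h \<bullet> x)) *\<^sub>R g x)
       \<le> norm h^2 * c * (exp (\<beta> \<bullet> x) * (1 + norm x)^(k + 2) * exp (r * norm x))"
proof -
  have "norm x^2 * (1 + norm x)^k \<le> (1 + norm x)^2 * (1 + norm x)^k"
    by (intro mult_right_mono power_mono) auto
  also have "\<dots> = (1 + norm x)^(k + 2)" by (simp only: power_add mult.commute)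
  finally have pow: "norm x^2 * (1 + norm x)^k \<le> (1 + norm x)^(k + 2)" .
  have "norm ((exp (\<beta> \<bullet> x) * (exp (h \<bullet> x) - 1 - h \<bullet> x)) *\<^sub>R g x)
      = exp (\<beta> \<bullet> x) * (\<bar>exp (h \<bullet> x) - 1 - h \<bullet> x\<bar> * norm (g x))"
    by (simp add: abs_mult)
  also have "\<dots> \<le> exp (\<beta> \<bullet> x) * ((norm h^2 * norm x^2 * exp (r * norm x)) * (c * (1 + norm x)^k))"
    using abs_exp_inner_taylor_le[OF h, of x] c(2)[of x] c(1) by (intro mult_left_mono mult_mono) auto
  also have "\<dots> = norm h^2 * c * (exp (\<beta> \<bullet> x) * (norm x^2 * (1 + norm x)^k) * exp (r * norm x))"
    by (simp add: algebra_simps)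
  also have "\<dots> \<le> norm h^2 * c * (exp (\<beta> \<bullet> x) * (1 + norm x)^(k + 2) * exp (r * norm x))"
    using pow c(1) by (intro mult_left_mono mult_right_mono) auto
  finally show ?thesis .
qed

lemma power_le_fact_exp:
  assumes "0 \<le> (x::real)" "0 < r"
  shows "x^k \<le> fact k / r^k * exp (r*x)"
proof -
  obtain t where t: "exp (r*x) = (\<Sum>m<Suc k. (r*x)^m / fact m) + exp t / fact (Suc k) * (r*x)^(Suc k)"
    using Maclaurin_exp_le[of "r*x" "Suc k"] by blast
  have "(r*x)^k / fact k \<le> (\<Sum>m<Suc k. (r*x)^m / fact m)"
    by (rule member_le_sum) (use assms in auto)
  also have "\<dots> \<le> exp (r*x)" using t assms by simp
  finally have "r^k * x^k \<le> fact k * exp (r*x)" by (simp add: field_simps power_mult_distrib)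
  then show ?thesis using assms by (simp add: field_simps)
qed

lemma exp_norm_le_sum_exp_coords:
  fixes x :: "real^'m"
  assumes "0 \<le> s"
  shows "exp (s / CARD('m) * norm x) \<le> (\<Sum>i\<in>UNIV. exp (s * x $ i) + exp (- (s * x $ i)))"
proof -
  obtain j where j: "\<And>i. \<bar>x $ i\<bar> \<le> \<bar>x $ j\<bar>"
    using Max_in[of "range (\<lambda>i. \<bar>x $ i\<bar>)"] Max_ge[of "range (\<lambda>i. \<bar>x $ i\<bar>)"] by fastforce
  have "norm x \<le> (\<Sum>i\<in>UNIV. \<bar>x $ i\<bar>)" by (rule norm_le_l1_cart)
  also have "\<dots> \<le> CARD('m) * \<bar>x $ j\<bar>" using sum_bounded_above[of UNIV "\<lambda>i. \<bar>x $ i\<bar>"] j by auto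
  finally have "s / CARD('m) * norm x \<le> s * \<bar>x $ j\<bar>"
    using assms by (simp add: field_simps mult_left_mono)
  then have "exp (s / CARD('m) * norm x) \<le> exp (s * \<bar>x $ j\<bar>)" by simp
  also have "\<dots> \<le> exp (s * x $ j) + exp (- (s * x $ j))"
    by (cases "x $ j \<ge> 0") (auto simp: add_increasing2 add_increasing)
  also have "\<dots> \<le> (\<Sum>i\<in>UNIV. exp (s * x $ i) + exp (- (s * x $ i)))"
    by (rule member_le_sum[where f="\<lambda>i. exp (s * x $ i) + exp (- (s * x $ i))"]) auto
  finally show ?thesis .
qed

lemma has_derivative_at_quadratic_remainder:
  fixes F :: "'a::real_normed_vector \<Rightarrow> 'b::real_normed_vector"
  assumes "bounded_linear L" "0 < r" "0 \<le> C"
    and "\<And>h. norm h \<le> r \<Longrightarrow> norm (F (x + h) - F x - L h) \<le> C * norm h^2"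
  shows "(F has_derivative L) (at x)"
  unfolding has_derivative_at_alt
proof (intro conjI assms(1) allI impI)
  fix e :: real assume e: "e > 0"
  show "\<exists>d>0. \<forall>y. norm (y - x) < d \<longrightarrow> norm (F y - F x - L (y - x)) \<le> e * norm (y - x)"
  proof (intro exI[of _ "min r (e / (C + 1))"] conjI allI impI)
    show "0 < min r (e / (C + 1))" using assms e by auto
    fix y assume y: "norm (y - x) < min r (e / (C + 1))"
    have "norm (F y - F x - L (y - x)) \<le> C * norm (y - x)^2"
      using assms(4)[of "y - x"] y by simp
    also have "\<dots> \<le> (C + 1) * norm (y - x) * norm (y - x)"
      by (simp add: power2_eq_square algebra_simps)
    also have "\<dots> \<le> e * norm (y - x)"
      using y assms(3) by (intro mult_right_mono) (auto simp: field_simps)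
    finally show "norm (F y - F x - L (y - x)) \<le> e * norm (y - x)" .
  qed
qed

section \<open>Functions of polynomial growth\<close>

definition poly_growth :: "(real^'m \<Rightarrow> 'b::real_normed_vector) \<Rightarrow> bool" where
  "poly_growth g \<longleftrightarrow> continuous_on UNIV g \<and> (\<exists>c k. c \<ge> 0 \<and> (\<forall>x. norm (g x) \<le> c * (1 + norm x)^k))"

lemma poly_growth_const [simp]: "poly_growth (\<lambda>x. c)"
  unfolding poly_growth_def by (intro conjI continuous_intros exI[of _ "norm c"] exI[of _ 0]) auto

lemma poly_growth_id [simp]: "poly_growth (\<lambda>x. x)"
  unfolding poly_growth_def by (intro conjI continuous_intros exI[of _ 1] exI[of _ 1]) auto

lemma poly_growth_add [simp]:
  assumes "poly_growth f" "poly_growth g"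
  shows "poly_growth (\<lambda>x. f x + g x)"
proof -
  obtain c k where c: "c \<ge> 0" "\<forall>x. norm (f x) \<le> c * (1 + norm x)^k"
    using assms(1) poly_growth_def by blast
  obtain d l where d: "d \<ge> 0" "\<forall>x. norm (g x) \<le> d * (1 + norm x)^l"
    using assms(2) poly_growth_def by blast
  have "norm (f x + g x) \<le> (c + d) * (1 + norm x)^(k + l)" for x
  proof -
    have "norm (f x + g x) \<le> c * (1 + norm x)^k + d * (1 + norm x)^l"
      using c d norm_triangle_ineq[of "f x" "g x"] by (smt (verit))
    also have "\<dots> \<le> c * (1 + norm x)^(k + l) + d * (1 + norm x)^(k + l)"
      using c d by (intro add_mono mult_left_mono power_increasing) auto
    finally show ?thesis by (simp add: algebra_simps)
  qed
  then show ?thesis using assms c d unfolding poly_growth_def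
    by (intro conjI continuous_intros exI[of _ "c + d"] exI[of _ "k + l"]) auto
qed

lemma poly_growth_bilinear:
  assumes "poly_growth f" "poly_growth g"
    and "continuous_on UNIV (\<lambda>x. B (f x) (g x))"
    and "\<And>a b. norm (B a b) \<le> norm a * norm b"
  shows "poly_growth (\<lambda>x. B (f x) (g x))"
proof -
  obtain c k where c: "c \<ge> 0" "\<forall>x. norm (f x) \<le> c * (1 + norm x)^k"
    using assms(1) poly_growth_def by blast
  obtain d l where d: "d \<ge> 0" "\<forall>x. norm (g x) \<le> d * (1 + norm x)^l"
    using assms(2) poly_growth_def by blast
  have "norm (B (f x) (g x)) \<le> (c * d) * (1 + norm x)^(k + l)" for x
  proof -
    have "norm (B (f x) (g x)) \<le> norm (f x) * norm (g x)" by (rule assms(4))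
    also have "\<dots> \<le> (c * (1 + norm x)^k) * (d * (1 + norm x)^l)"
      using c d by (intro mult_mono) auto
    finally show ?thesis by (simp add: algebra_simps power_add)
  qed
  moreover have "c * d \<ge> 0" using c d by simp
  ultimately show ?thesis
    unfolding poly_growth_def using assms(3) by (intro conjI exI[of _ "c * d"] exI[of _ "k + l"]) auto
qed

lemma poly_growth_scaleR [simp]:
  assumes "poly_growth f" "poly_growth g"
  shows "poly_growth (\<lambda>x. f x *\<^sub>R g x)"
  using assms by (intro poly_growth_bilinear[OF assms] continuous_on_scaleR) (auto simp: poly_growth_def)

lemma poly_growth_mult [simp]:
  assumes "poly_growth f" "poly_growth (g :: _ \<Rightarrow> real)"
  shows "poly_growth (\<lambda>x. f x * g x)"
  using poly_growth_scaleR[OF assms] by simp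

lemma poly_growth_inner [simp]:
  assumes "poly_growth f" "poly_growth g"
  shows "poly_growth (\<lambda>x. f x \<bullet> g x)"
  using assms
  by (intro poly_growth_bilinear[OF assms] continuous_on_inner) (auto simp: poly_growth_def Cauchy_Schwarz_ineq2)

lemma poly_growth_diff [simp]:
  assumes "poly_growth f" "poly_growth g"
  shows "poly_growth (\<lambda>x. f x - g x)"
  using poly_growth_add[OF assms(1) poly_growth_scaleR[OF poly_growth_const[of "-1"] assms(2)]] by simp

lemma poly_growth_nth [simp]: "poly_growth (\<lambda>x. x $ i)"
  using poly_growth_inner[OF poly_growth_id poly_growth_const[of "axis i 1"]] by (simp add: inner_axis)

lemma poly_growth_sum [simp]:
  assumes "\<And>j. poly_growth (f j)"
  shows "poly_growth (\<lambda>x. \<Sum>j\<in>A. f j x)"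
proof (cases "finite A")
  case True then show ?thesis
    by (induction A rule: finite_induct) (simp_all add: assms)
qed simp

section \<open>Matrix algebra\<close>

lemma matrix_inv_right: "invertible (A::'a::semiring_1^'n^'n) \<Longrightarrow> A ** matrix_inv A = mat 1"
  unfolding invertible_def matrix_inv_def by (rule someI2_ex) auto

lemma matrix_inv_left: "invertible (A::'a::semiring_1^'n^'n) \<Longrightarrow> matrix_inv A ** A = mat 1"
  unfolding invertible_def matrix_inv_def by (rule someI2_ex) auto

lemma matrix_inv_unique:
  fixes A B :: "real^'n^'n"
  assumes "B ** A = mat 1"
  shows "matrix_inv A = B"
proof -
  have inv: "invertible A" using assms invertible_left_inverse by blast
  have "matrix_inv A = (B ** A) ** matrix_inv A" using assms by simp
  also have "\<dots> = B" by (simp add: matrix_inv_right[OF inv] flip: matrix_mul_assoc)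
  finally show "matrix_inv A = B" .
qed

lemma transpose_matrix_inv_symmetric:
  fixes A :: "real^'n^'n"
  assumes "transpose A = A" "invertible A"
  shows "transpose (matrix_inv A) = matrix_inv A"
proof -
  have "transpose (matrix_inv A) ** A = mat 1"
    using arg_cong[OF matrix_inv_right[OF assms(2)], of transpose] assms(1)
    by (simp add: matrix_transpose_mul)
  then show ?thesis by (rule matrix_inv_unique[symmetric])
qed

lemma matrix_diff_ldistrib: "(A::'a::ring_1^'n^'m) ** (B - C) = A ** B - A ** C"
  by (simp add: matrix_matrix_mult_def vec_eq_iff sum_subtractf algebra_simps)

lemma matrix_diff_rdistrib: "((A::'a::ring_1^'n^'m) - B) ** C = A ** C - B ** C"
  by (simp add: matrix_matrix_mult_def vec_eq_iff sum_subtractf algebra_simps)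

lemma matrix_add_rdistrib: "((A::'a::semiring_1^'n^'m) + B) ** C = A ** C + B ** C"
  by (simp add: matrix_matrix_mult_def vec_eq_iff sum.distrib algebra_simps)

lemma transpose_add: "transpose ((A::'a::plus^'n^'m) + B) = transpose A + transpose B"
  by (simp add: transpose_def vec_eq_iff)

lemma inner_matrix_vector_mult: "x \<bullet> ((A::real^'n^'m) *v y) = (transpose A *v x) \<bullet> y"
  by (simp add: dot_lmul_matrix)

definition pos_def :: "real^'n^'n \<Rightarrow> bool" where
  "pos_def A \<longleftrightarrow> transpose A = A \<and> (\<forall>x. x \<noteq> 0 \<longrightarrow> 0 < x \<bullet> (A *v x))"

lemma pos_def_imp_psd_cov: "pos_def A \<Longrightarrow> psd_cov A"
  unfolding pos_def_def psd_cov_def by (metis inner_zero_left order.refl less_imp_le)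

lemma pos_def_invertible: "pos_def A \<Longrightarrow> invertible A"
  unfolding pos_def_def invertible_left_inverse
  by (intro matrix_left_invertible_ker[THEN iffD2] allI impI) force

lemma psd_cov_add: "psd_cov A \<Longrightarrow> psd_cov B \<Longrightarrow> psd_cov (A + B)"
  unfolding psd_cov_def by (simp add: transpose_add matrix_vector_mult_add_rdistrib inner_add_right add_nonneg_nonneg)

lemma pos_def_add_psd_cov: "pos_def A \<Longrightarrow> psd_cov B \<Longrightarrow> pos_def (A + B)"
  unfolding pos_def_def psd_cov_def
  by (simp add: transpose_add matrix_vector_mult_add_rdistrib inner_add_right add_pos_nonneg)

lemma psd_cov_congruence:
  fixes A :: "real^'n^'n" and H :: "real^'m^'n"
  assumes "psd_cov A"
  shows "psd_cov (transpose H ** A ** H)"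
proof -
  have "x \<bullet> ((transpose H ** A ** H) *v x) = (H *v x) \<bullet> (A *v (H *v x))" for x
    by (simp only: inner_matrix_vector_mult transpose_transpose matrix_vector_mul_assoc[symmetric])
  then show ?thesis
    using assms by (simp add: psd_cov_def matrix_transpose_mul matrix_mul_assoc)
qed

lemma psd_cov_inverse:
  fixes J :: "real^'n^'n"
  assumes "psd_cov J" "J ** P = mat 1"
  shows "psd_cov P"
proof -
  have P: "P = matrix_inv J"
    using matrix_inv_unique[of P J] assms(2) matrix_left_right_inverse by metis
  have "invertible J" using assms(2) invertible_right_inverse by blast
  then have "transpose P = P"
    using assms(1) transpose_matrix_inv_symmetric unfolding P psd_cov_def by blast
  moreover have "0 \<le> x \<bullet> (P *v x)" for x
  proof -
    have "x \<bullet> (P *v x) = (P *v x) \<bullet> (J *v (P *v x))"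
      using assms(2) by (simp add: matrix_vector_mul_assoc inner_commute)
    then show ?thesis using assms(1) by (simp add: psd_cov_def)
  qed
  ultimately show ?thesis by (simp add: psd_cov_def)
qed

lemma information_matrix_mult_gain:
  fixes Pp :: "real^'n^'n" and H :: "real^'n^'m" and R :: "real^'m^'m"
  assumes Pp: "invertible Pp" and R: "invertible R" and S: "invertible (H ** Pp ** transpose H + R)"
  shows "(matrix_inv Pp + transpose H ** matrix_inv R ** H) ** (Pp ** transpose H ** matrix_inv (H ** Pp ** transpose H + R))
       = transpose H ** matrix_inv R"
proof -
  define M where "M = transpose H"
  define Ri where "Ri = matrix_inv R"
  define S where "S = H ** Pp ** M + R"
  have S_inv: "invertible S" using S by (simp add: S_def M_def)
  have HPM: "H ** Pp ** M = S - R" by (simp add: S_def)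
  have "(matrix_inv Pp + M ** Ri ** H) ** (Pp ** M ** matrix_inv S)
      = matrix_inv Pp ** Pp ** M ** matrix_inv S + M ** Ri ** (H ** Pp ** M) ** matrix_inv S"
    by (simp add: matrix_add_rdistrib matrix_mul_assoc)
  also have "\<dots> = M ** matrix_inv S + (M ** Ri ** S - M ** (Ri ** R)) ** matrix_inv S"
    unfolding HPM by (simp add: matrix_inv_left[OF Pp] matrix_diff_ldistrib matrix_mul_assoc)
  also have "\<dots> = M ** matrix_inv S + M ** Ri ** (S ** matrix_inv S) - M ** matrix_inv S"
    by (simp add: Ri_def matrix_inv_left[OF R] matrix_diff_rdistrib matrix_mul_assoc)
  also have "\<dots> = M ** Ri" by (simp add: matrix_inv_right[OF S_inv])
  finally show ?thesis by (simp add: M_def Ri_def S_def)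
qed

lemma kalman_information_form:
  fixes Pp :: "real^'n^'n" and H :: "real^'n^'m" and R :: "real^'m^'m"
  assumes Pp: "psd_cov Pp" "invertible Pp" and R: "pos_def R"
  defines "K \<equiv> Pp ** transpose H ** matrix_inv (H ** Pp ** transpose H + R)"
  shows "matrix_inv (matrix_inv Pp + transpose H ** matrix_inv R ** H) = (mat 1 - K ** H) ** Pp"
    and "K = (mat 1 - K ** H) ** Pp ** transpose H ** matrix_inv R"
    and "psd_cov ((mat 1 - K ** H) ** Pp)"
proof -
  define J where "J = matrix_inv Pp + transpose H ** matrix_inv R ** H"
  define P where "P = (mat 1 - K ** H) ** Pp"
  have R_inv: "invertible R" using pos_def_invertible[OF R] .
  have "invertible (H ** Pp ** transpose H + R)"
    using pos_def_add_psd_cov[OF R psd_cov_congruence[OF Pp(1), of "transpose H"]]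
    by (simp add: add.commute pos_def_invertible)
  from information_matrix_mult_gain[OF Pp(2) R_inv this]
  have JK: "J ** K = transpose H ** matrix_inv R" by (simp add: J_def K_def)
  have JP: "J ** P = mat 1"
  proof -
    have "J ** P = J ** Pp - (J ** K) ** H ** Pp"
      by (simp add: P_def matrix_diff_rdistrib matrix_diff_ldistrib matrix_mul_assoc)
    also have "J ** Pp = mat 1 + transpose H ** matrix_inv R ** H ** Pp"
      by (simp add: J_def matrix_add_rdistrib matrix_inv_left[OF Pp(2)])
    finally show ?thesis by (simp add: JK matrix_mul_assoc)
  qed
  then have PJ: "P ** J = mat 1" using matrix_left_right_inverse by blast
  from matrix_inv_unique[OF PJ]
  show "matrix_inv (matrix_inv Pp + transpose H ** matrix_inv R ** H) = (mat 1 - K ** H) ** Pp"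
    by (simp add: J_def P_def)
  have "K = P ** (J ** K)" using PJ by (simp add: matrix_mul_assoc)
  then show "K = (mat 1 - K ** H) ** Pp ** transpose H ** matrix_inv R"
    unfolding JK by (simp add: P_def matrix_mul_assoc)
  have "psd_cov (matrix_inv Pp)" "psd_cov (matrix_inv R)"
    using psd_cov_inverse[OF Pp(1) matrix_inv_right[OF Pp(2)]]
      psd_cov_inverse[OF pos_def_imp_psd_cov[OF R] matrix_inv_right[OF R_inv]] by auto
  then have "psd_cov J"
    unfolding J_def by (intro psd_cov_add psd_cov_congruence)
  then show "psd_cov ((mat 1 - K ** H) ** Pp)" using psd_cov_inverse JP P_def by blast
qed

section \<open>Regular exponential families\<close>

locale exponential_family =
  fixes T :: "'y \<Rightarrow> real^'m" and lam :: "'y measure"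
  assumes exp_family: "exp_family T lam"
begin

abbreviation natparams where "natparams \<equiv> ef_natparams T lam"

lemma T_measurable: "T \<in> borel_measurable lam"
  using exp_family exp_family_def by blast

lemma open_natparams: "open natparams"
  using exp_family exp_family_def by blast

lemma lin_indep: "lin_indep_stats T lam"
  using exp_family exp_family_def by blast

lemma borel_measurable_continuous_comp_T:
  "continuous_on UNIV g \<Longrightarrow> (\<lambda>y. g (T y)) \<in> borel_measurable lam"
  using measurable_compose[OF T_measurable borel_measurable_continuous_onI] by blast

lemma integrable_exp_natparam: "\<beta> \<in> natparams \<Longrightarrow> integrable lam (\<lambda>y. exp (\<beta> \<bullet> T y))"
  by (simp add: ef_natparams_def)

lemma convex_natparams: "convex natparams"
proof (rule convexI)
  fix a b and u v :: real
  assume ab: "a \<in> natparams" "b \<in> natparams" and uv: "0 \<le> u" "0 \<le> v" "u + v = 1"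
  have "integrable lam (\<lambda>y. exp ((u *\<^sub>R a + v *\<^sub>R b) \<bullet> T y))"
  proof (rule Bochner_Integration.integrable_bound)
    show "integrable lam (\<lambda>y. u * exp (a \<bullet> T y) + v * exp (b \<bullet> T y))"
      using integrable_exp_natparam[OF ab(1)] integrable_exp_natparam[OF ab(2)] by auto
    show "(\<lambda>y. exp ((u *\<^sub>R a + v *\<^sub>R b) \<bullet> T y)) \<in> borel_measurable lam"
      by (rule borel_measurable_continuous_comp_T[where g="\<lambda>x. exp ((u *\<^sub>R a + v *\<^sub>R b) \<bullet> x)"])
        (intro continuous_intros)
    have u: "u = 1 - v" using uv by simp
    have "exp (u * (a \<bullet> x) + v * (b \<bullet> x)) \<le> u * exp (a \<bullet> x) + v * exp (b \<bullet> x)" for x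
      using convex_onD[OF exp_convex, of v "a \<bullet> x" "b \<bullet> x"] uv unfolding u by simp
    then show "AE y in lam. norm (exp ((u *\<^sub>R a + v *\<^sub>R b) \<bullet> T y))
        \<le> norm (u * exp (a \<bullet> T y) + v * exp (b \<bullet> T y))"
      using uv by (intro AE_I2) (simp add: inner_add_left)
  qed
  then show "u *\<^sub>R a + v *\<^sub>R b \<in> natparams" by (simp add: ef_natparams_def)
qed

lemma ef_Z_pos:
  assumes "\<beta> \<in> natparams"
  shows "ef_Z T lam \<beta> > 0"
proof -
  have "ef_Z T lam \<beta> \<noteq> 0"
  proof
    assume "ef_Z T lam \<beta> = 0"
    then have "AE y in lam. exp (\<beta> \<bullet> T y) = 0"
      using integral_nonneg_eq_0_iff_AE[OF integrable_exp_natparam[OF assms]] by (simp add: ef_Z_def)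
    then have "AE y in lam. axis undefined 1 \<bullet> T y = 0" by (rule eventually_mono) simp
    moreover have "axis undefined (1::real) \<noteq> (0::real^'m)"
      by (metis axis_nth zero_index zero_neq_one)
    ultimately show False using lin_indep unfolding lin_indep_stats_def by blast
  qed
  moreover have "ef_Z T lam \<beta> \<ge> 0" by (simp add: ef_Z_def integral_nonneg_AE)
  ultimately show ?thesis by simp
qed

lemma integrable_exp_norm_natparam:
  assumes "\<beta> \<in> natparams"
  obtains r where "r > 0" "\<And>h. norm h \<le> r \<Longrightarrow> \<beta> + h \<in> natparams"
    "integrable lam (\<lambda>y. exp (\<beta> \<bullet> T y) * exp (2 * r * norm (T y)))"
proof -
  obtain e where e: "e > 0" "ball \<beta> e \<subseteq> natparams"
    using open_natparams assms open_contains_ball by blast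
  define s where "s = e / 2"
  define r where "r = s / (2 * CARD('m))"
  have s: "0 < s" "s < e" using e by (auto simp: s_def)
  have card: "1 \<le> 2 * real CARD('m)" using zero_less_card_finite[where 'a='m] by linarith
  have r: "0 < r" "r \<le> s" using s unfolding r_def by (simp, simp add: divide_le_eq card)
  have near: "\<beta> + h \<in> natparams" if "norm h < e" for h
    using that e(2) by (auto simp: dist_norm subset_iff)
  \<comment> \<open>\<open>exp (2 r |x|)\<close> is dominated by the densities at the natural parameters \<open>\<beta> \<plusminus> s e\<^sub>i\<close>\<close>
  define B where "B y = (\<Sum>i\<in>UNIV. exp ((\<beta> + s *\<^sub>R axis i 1) \<bullet> T y) + exp ((\<beta> - s *\<^sub>R axis i 1) \<bullet> T y))" for y
  have "integrable lam (\<lambda>y. exp (\<beta> \<bullet> T y) * exp (2 * r * norm (T y)))"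
  proof (rule Bochner_Integration.integrable_bound)
    have "\<beta> + s *\<^sub>R axis i 1 \<in> natparams" "\<beta> - s *\<^sub>R axis i 1 \<in> natparams" for i
      using near[of "s *\<^sub>R axis i 1"] near[of "- (s *\<^sub>R axis i 1)"] s by (auto simp: norm_axis_1)
    then show "integrable lam B" unfolding B_def
      by (intro Bochner_Integration.integrable_sum Bochner_Integration.integrable_add integrable_exp_natparam)
    show "(\<lambda>y. exp (\<beta> \<bullet> T y) * exp (2 * r * norm (T y))) \<in> borel_measurable lam"
      by (rule borel_measurable_continuous_comp_T[where g="\<lambda>x. exp (\<beta> \<bullet> x) * exp (2 * r * norm x)"])
        (intro continuous_intros)
    have "exp (\<beta> \<bullet> x) * exp (2 * r * norm x)
        \<le> exp (\<beta> \<bullet> x) * (\<Sum>i\<in>UNIV. exp (s * x $ i) + exp (- (s * x $ i)))" for x :: "real^'m"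
      using exp_norm_le_sum_exp_coords[of s x] s by (simp add: r_def)
    also have "exp (\<beta> \<bullet> x) * (\<Sum>i\<in>UNIV. exp (s * x $ i) + exp (- (s * x $ i)))
        = (\<Sum>i\<in>UNIV. exp ((\<beta> + s *\<^sub>R axis i 1) \<bullet> x) + exp ((\<beta> - s *\<^sub>R axis i 1) \<bullet> x))" for x :: "real^'m"
      by (simp add: sum_distrib_left distrib_left inner_add_left inner_diff_left inner_axis'
          exp_add exp_diff exp_minus divide_inverse)
    finally show "AE y in lam. norm (exp (\<beta> \<bullet> T y) * exp (2 * r * norm (T y))) \<le> norm (B y)"
      by (intro AE_I2) (simp add: B_def abs_of_nonneg sum_nonneg)
  qed
  then show ?thesis using that r s near by force
qed

lemma exponential_moments:
  assumes "\<beta> \<in> natparams"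
  obtains r where "r > 0" "\<And>h. norm h \<le> r \<Longrightarrow> \<beta> + h \<in> natparams"
    "\<And>k. integrable lam (\<lambda>y. exp (\<beta> \<bullet> T y) * (1 + norm (T y))^k * exp (r * norm (T y)))"
proof -
  obtain r where r: "r > 0" "\<And>h. norm h \<le> r \<Longrightarrow> \<beta> + h \<in> natparams"
    and int: "integrable lam (\<lambda>y. exp (\<beta> \<bullet> T y) * exp (2 * r * norm (T y)))"
    using integrable_exp_norm_natparam[OF assms] by blast
  have "integrable lam (\<lambda>y. exp (\<beta> \<bullet> T y) * (1 + norm (T y))^k * exp (r * norm (T y)))" for k
  proof (rule Bochner_Integration.integrable_bound)
    define C where "C = fact k / r^k * exp r"
    have C: "C \<ge> 0" using r by (simp add: C_def)
    show "integrable lam (\<lambda>y. C * (exp (\<beta> \<bullet> T y) * exp (2 * r * norm (T y))))"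
      using int by simp
    show "(\<lambda>y. exp (\<beta> \<bullet> T y) * (1 + norm (T y))^k * exp (r * norm (T y))) \<in> borel_measurable lam"
      by (rule borel_measurable_continuous_comp_T[where g="\<lambda>x. exp (\<beta> \<bullet> x) * (1 + norm x)^k * exp (r * norm x)"])
        (intro continuous_intros)
    have "(1 + norm x)^k \<le> C * exp (r * norm x)" for x :: "real^'m"
      using power_le_fact_exp[of "1 + norm x" r k] r by (simp add: C_def distrib_left exp_add)
    then have "exp (\<beta> \<bullet> x) * (1 + norm x)^k * exp (r * norm x)
        \<le> exp (\<beta> \<bullet> x) * (C * exp (r * norm x)) * exp (r * norm x)" for x :: "real^'m"
      by (intro mult_right_mono mult_left_mono) auto
    moreover have "exp (2 * r * norm x) = exp (r * norm x) * exp (r * norm x)" for x :: "real^'m"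
      by (simp add: exp_add[symmetric] mult.assoc)
    ultimately have "exp (\<beta> \<bullet> x) * (1 + norm x)^k * exp (r * norm x)
        \<le> C * (exp (\<beta> \<bullet> x) * exp (2 * r * norm x))" for x :: "real^'m"
      by (simp add: mult_ac)
    then show "AE y in lam. norm (exp (\<beta> \<bullet> T y) * (1 + norm (T y))^k * exp (r * norm (T y)))
        \<le> norm (C * (exp (\<beta> \<bullet> T y) * exp (2 * r * norm (T y))))"
      using C by (intro AE_I2) simp
  qed
  then show ?thesis using that r by blast
qed

lemma integrable_exp_poly_growth:
  fixes g :: "real^'m \<Rightarrow> 'b::{banach,second_countable_topology}"
  assumes "\<beta> \<in> natparams" "poly_growth g"
  shows "integrable lam (\<lambda>y. exp (\<beta> \<bullet> T y) *\<^sub>R g (T y))"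
proof -
  obtain r where r: "r > 0"
    "\<And>k. integrable lam (\<lambda>y. exp (\<beta> \<bullet> T y) * (1 + norm (T y))^k * exp (r * norm (T y)))"
    using exponential_moments[OF assms(1)] by blast
  obtain c k where c: "c \<ge> 0" "\<And>x. norm (g x) \<le> c * (1 + norm x)^k" and cont: "continuous_on UNIV g"
    using assms(2) poly_growth_def by blast
  show ?thesis
  proof (rule Bochner_Integration.integrable_bound)
    show "integrable lam (\<lambda>y. c * (exp (\<beta> \<bullet> T y) * (1 + norm (T y))^k * exp (r * norm (T y))))"
      using r(2) by simp
    show "(\<lambda>y. exp (\<beta> \<bullet> T y) *\<^sub>R g (T y)) \<in> borel_measurable lam"
      by (rule borel_measurable_continuous_comp_T[where g="\<lambda>x. exp (\<beta> \<bullet> x) *\<^sub>R g x"])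
        (intro continuous_intros cont)
    have "exp (\<beta> \<bullet> x) * norm (g x) \<le> c * (exp (\<beta> \<bullet> x) * (1 + norm x)^k * exp (r * norm x))" for x
    proof -
      have "exp (\<beta> \<bullet> x) * norm (g x) \<le> exp (\<beta> \<bullet> x) * (c * (1 + norm x)^k) * 1"
        using c by simp
      also have "\<dots> \<le> exp (\<beta> \<bullet> x) * (c * (1 + norm x)^k) * exp (r * norm x)"
        using c r by (intro mult_left_mono) auto
      finally show ?thesis by (simp add: mult_ac)
    qed
    then show "AE y in lam. norm (exp (\<beta> \<bullet> T y) *\<^sub>R g (T y))
        \<le> norm (c * (exp (\<beta> \<bullet> T y) * (1 + norm (T y))^k * exp (r * norm (T y))))"
      using c by (intro AE_I2) (simp add: abs_mult)
  qed
qed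

lemma exp_integral_remainder_le:
  fixes g :: "real^'m \<Rightarrow> 'b::{banach,second_countable_topology}"
  assumes \<beta>: "\<beta> \<in> natparams" "\<beta> + h \<in> natparams" and h: "norm h \<le> r"
    and g: "poly_growth g" "c \<ge> 0" "\<And>x. norm (g x) \<le> c * (1 + norm x)^k"
    and moment: "integrable lam (\<lambda>y. exp (\<beta> \<bullet> T y) * (1 + norm (T y))^(k + 2) * exp (r * norm (T y)))"
  shows "norm ((\<integral>y. exp ((\<beta> + h) \<bullet> T y) *\<^sub>R g (T y) \<partial>lam) - (\<integral>y. exp (\<beta> \<bullet> T y) *\<^sub>R g (T y) \<partial>lam)
            - (\<integral>y. exp (\<beta> \<bullet> T y) *\<^sub>R ((h \<bullet> T y) *\<^sub>R g (T y)) \<partial>lam))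
         \<le> c * (\<integral>y. exp (\<beta> \<bullet> T y) * (1 + norm (T y))^(k + 2) * exp (r * norm (T y)) \<partial>lam) * norm h^2"
proof -
  define \<rho> where "\<rho> x = (exp (\<beta> \<bullet> x) * (exp (h \<bullet> x) - 1 - h \<bullet> x)) *\<^sub>R g x" for x
  have remainder_eq: "exp ((\<beta> + h) \<bullet> x) *\<^sub>R g x - exp (\<beta> \<bullet> x) *\<^sub>R g x - exp (\<beta> \<bullet> x) *\<^sub>R ((h \<bullet> x) *\<^sub>R g x) = \<rho> x"
    for x by (simp add: \<rho>_def inner_add_left exp_add algebra_simps)
  have ints: "integrable lam (\<lambda>y. exp ((\<beta> + h) \<bullet> T y) *\<^sub>R g (T y))"
    "integrable lam (\<lambda>y. exp (\<beta> \<bullet> T y) *\<^sub>R g (T y))"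
    "integrable lam (\<lambda>y. exp (\<beta> \<bullet> T y) *\<^sub>R ((h \<bullet> T y) *\<^sub>R g (T y)))"
    using integrable_exp_poly_growth[OF \<beta>(2) g(1)] integrable_exp_poly_growth[OF \<beta>(1) g(1)]
      integrable_exp_poly_growth[OF \<beta>(1), of "\<lambda>x. (h \<bullet> x) *\<^sub>R g x"] g(1) by simp_all
  then have int_\<rho>: "integrable lam (\<lambda>y. \<rho> (T y))"
    by (simp flip: remainder_eq)
  have bound: "norm (\<rho> x) \<le> norm h^2 * c * (exp (\<beta> \<bullet> x) * (1 + norm x)^(k + 2) * exp (r * norm x))" for x
    unfolding \<rho>_def using h g(2,3) by (rule norm_exp_inner_remainder_le)
  have "(\<integral>y. exp ((\<beta> + h) \<bullet> T y) *\<^sub>R g (T y) \<partial>lam) - (\<integral>y. exp (\<beta> \<bullet> T y) *\<^sub>R g (T y) \<partial>lam)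
      - (\<integral>y. exp (\<beta> \<bullet> T y) *\<^sub>R ((h \<bullet> T y) *\<^sub>R g (T y)) \<partial>lam) = (\<integral>y. \<rho> (T y) \<partial>lam)"
    by (simp only: remainder_eq[symmetric] Bochner_Integration.integral_diff[OF ints(1,2)]
        Bochner_Integration.integral_diff[OF Bochner_Integration.integrable_diff[OF ints(1,2)] ints(3)])
  also have "norm \<dots> \<le> (\<integral>y. norm (\<rho> (T y)) \<partial>lam)"
    by (rule integral_norm_bound)
  also have "\<dots> \<le> (\<integral>y. norm h^2 * c * (exp (\<beta> \<bullet> T y) * (1 + norm (T y))^(k + 2) * exp (r * norm (T y))) \<partial>lam)"
    by (rule Bochner_Integration.integral_mono[OF integrable_norm[OF int_\<rho>] integrable_mult_right[OF moment]])
      (rule bound)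
  also have "\<dots> = norm h^2 * c * (\<integral>y. exp (\<beta> \<bullet> T y) * (1 + norm (T y))^(k + 2) * exp (r * norm (T y)) \<partial>lam)"
    by (rule integral_mult_right_zero)
  finally show ?thesis by (simp only: mult_ac)
qed

lemma has_derivative_exp_integral:
  fixes g :: "real^'m \<Rightarrow> 'b::{banach,second_countable_topology}"
  assumes "\<beta> \<in> natparams" "poly_growth g"
  shows "((\<lambda>b. \<integral>y. exp (b \<bullet> T y) *\<^sub>R g (T y) \<partial>lam) has_derivative
           (\<lambda>d. \<integral>y. exp (\<beta> \<bullet> T y) *\<^sub>R ((d \<bullet> T y) *\<^sub>R g (T y)) \<partial>lam)) (at \<beta>)"
proof -
  obtain r where r: "r > 0" "\<And>h. norm h \<le> r \<Longrightarrow> \<beta> + h \<in> natparams"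
    "\<And>k. integrable lam (\<lambda>y. exp (\<beta> \<bullet> T y) * (1 + norm (T y))^k * exp (r * norm (T y)))"
    using exponential_moments[OF assms(1)] by blast
  obtain c k where c: "c \<ge> 0" "\<And>x. norm (g x) \<le> c * (1 + norm x)^k"
    using assms(2) poly_growth_def by blast
  define L where "L d = (\<integral>y. exp (\<beta> \<bullet> T y) *\<^sub>R ((d \<bullet> T y) *\<^sub>R g (T y)) \<partial>lam)" for d
  have int_L: "integrable lam (\<lambda>y. exp (\<beta> \<bullet> T y) *\<^sub>R ((d \<bullet> T y) *\<^sub>R g (T y)))" for d
    using assms by (intro integrable_exp_poly_growth) auto
  define M where "M = (\<integral>y. exp (\<beta> \<bullet> T y) * (1 + norm (T y))^(k + 2) * exp (r * norm (T y)) \<partial>lam)"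
  have "linear L"
  proof
    show "L (a + b) = L a + L b" for a b
      unfolding L_def inner_add_left scaleR_add_left scaleR_add_right
      by (rule Bochner_Integration.integral_add[OF int_L int_L])
    show "L (s *\<^sub>R a) = s *\<^sub>R L a" for s a
      unfolding L_def by (simp add: scaleR_scaleR mult.commute mult.left_commute flip: integral_scaleR_right)
  qed
  then have "bounded_linear L" by (simp add: linear_conv_bounded_linear)
  moreover have "0 \<le> c * M"
    using c by (simp add: M_def integral_nonneg_AE)
  ultimately have "((\<lambda>b. \<integral>y. exp (b \<bullet> T y) *\<^sub>R g (T y) \<partial>lam) has_derivative L) (at \<beta>)"
    using exp_integral_remainder_le[OF assms(1) r(2) _ assms(2) c r(3)] r(1)
    by (intro has_derivative_at_quadratic_remainder) (simp_all add: L_def M_def)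
  then show ?thesis unfolding L_def[abs_def] .
qed

definition expect :: "real^'m \<Rightarrow> (real^'m \<Rightarrow> 'b::{banach,second_countable_topology}) \<Rightarrow> 'b" where
  "expect \<beta> g = (\<integral>y. ef_dens T lam \<beta> y *\<^sub>R g (T y) \<partial>lam)"

lemma ef_dens_scaleR: "ef_dens T lam \<beta> y *\<^sub>R (v :: 'b::real_vector) = (1 / ef_Z T lam \<beta>) *\<^sub>R (exp (\<beta> \<bullet> T y) *\<^sub>R v)"
  by (simp add: ef_dens_def scaleR_scaleR)

lemma integrable_dens_poly_growth:
  assumes "\<beta> \<in> natparams" "poly_growth (g :: real^'m \<Rightarrow> 'b::{banach,second_countable_topology})"
  shows "integrable lam (\<lambda>y. ef_dens T lam \<beta> y *\<^sub>R g (T y))"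
  unfolding ef_dens_scaleR by (rule integrable_scaleR_right[OF integrable_exp_poly_growth[OF assms]])

lemma expect_eq_exp_integral:
  "expect \<beta> g = (1 / ef_Z T lam \<beta>) *\<^sub>R (\<integral>y. exp (\<beta> \<bullet> T y) *\<^sub>R g (T y) \<partial>lam)"
  unfolding expect_def ef_dens_scaleR by (rule integral_scaleR_right)

lemma expect_diff:
  assumes "\<beta> \<in> natparams" "poly_growth f" "poly_growth g"
  shows "expect \<beta> (\<lambda>x. f x - g x) = expect \<beta> f - expect \<beta> g"
  unfolding expect_def scaleR_diff_right
  using assms by (intro Bochner_Integration.integral_diff integrable_dens_poly_growth)

lemma expect_sum:
  assumes "\<beta> \<in> natparams" "\<And>j. poly_growth (f j)"
  shows "expect \<beta> (\<lambda>x. \<Sum>j\<in>A. f j x) = (\<Sum>j\<in>A. expect \<beta> (f j))"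
  unfolding expect_def scaleR_sum_right
  using assms by (intro Bochner_Integration.integral_sum integrable_dens_poly_growth)

lemma expect_scaleR_right: "expect \<beta> (\<lambda>x. c *\<^sub>R g x) = c *\<^sub>R expect \<beta> g"
proof -
  have "ef_dens T lam \<beta> y *\<^sub>R c *\<^sub>R g (T y) = c *\<^sub>R ef_dens T lam \<beta> y *\<^sub>R g (T y)" for y
    by (rule scaleR_left_commute)
  then show ?thesis unfolding expect_def by (simp only: integral_scaleR_right)
qed

lemma expect_mult_left: "expect \<beta> (\<lambda>x. c * (g x :: real)) = c * expect \<beta> g"
  using expect_scaleR_right[of \<beta> c g] by simp

lemma expect_scaleR_left:
  assumes "\<beta> \<in> natparams" "poly_growth (f :: real^'m \<Rightarrow> real)"
  shows "expect \<beta> (\<lambda>x. f x *\<^sub>R v) = expect \<beta> f *\<^sub>R v"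
  unfolding expect_def
  using integral_scaleR_left[OF integrable_dens_poly_growth[OF assms], of v] by simp

lemma expect_inner_left:
  assumes "\<beta> \<in> natparams" "poly_growth g"
  shows "expect \<beta> (\<lambda>x. g x \<bullet> v) = expect \<beta> g \<bullet> v"
  unfolding expect_def
  using integral_inner_left[OF integrable_dens_poly_growth[OF assms], of v] by simp

lemma expect_const:
  assumes "\<beta> \<in> natparams"
  shows "expect \<beta> (\<lambda>x. v) = v"
  using ef_Z_pos[OF assms] integral_scaleR_left[OF integrable_exp_natparam[OF assms], of v]
  by (simp add: expect_eq_exp_integral ef_Z_def)

lemma ef_mean_eq_expect: "ef_mean T lam \<beta> = expect \<beta> (\<lambda>x. x)"
  by (simp add: ef_mean_def expect_def)

lemma expect_inner_id:
  assumes "\<beta> \<in> natparams"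
  shows "expect \<beta> (\<lambda>x. d \<bullet> x) = ef_mean T lam \<beta> \<bullet> d"
  using expect_inner_left[OF assms poly_growth_id, of d] by (simp add: ef_mean_eq_expect inner_commute)

definition cov :: "real^'m \<Rightarrow> real^'m^'m" where
  "cov \<beta> = (\<chi> i j. expect \<beta> (\<lambda>x. (x $ i - ef_mean T lam \<beta> $ i) * (x $ j - ef_mean T lam \<beta> $ j)))"

lemma transpose_cov: "transpose (cov \<beta>) = cov \<beta>"
  by (simp add: cov_def transpose_def vec_eq_iff mult.commute)

lemma cov_mult_vec:
  assumes "\<beta> \<in> natparams"
  shows "cov \<beta> *v d = expect \<beta> (\<lambda>x. ((x - ef_mean T lam \<beta>) \<bullet> d) *\<^sub>R (x - ef_mean T lam \<beta>))"
proof (subst vec_eq_iff, intro allI)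
  fix i
  define m where "m = ef_mean T lam \<beta>"
  have coord: "(((x - m) \<bullet> d) *\<^sub>R (x - m)) \<bullet> axis i 1 = (\<Sum>j\<in>UNIV. d $ j *\<^sub>R ((x $ i - m $ i) * (x $ j - m $ j)))"
    for x unfolding inner_axis by (simp add: inner_vec_def inner_real_def sum_distrib_left mult_ac)
  have "(cov \<beta> *v d) $ i = (\<Sum>j\<in>UNIV. expect \<beta> (\<lambda>x. d $ j *\<^sub>R ((x $ i - m $ i) * (x $ j - m $ j))))"
    by (simp add: matrix_vector_mult_def cov_def expect_mult_left m_def mult.commute)
  also have "\<dots> = expect \<beta> (\<lambda>x. (((x - m) \<bullet> d) *\<^sub>R (x - m)) \<bullet> axis i 1)"
    unfolding coord by (rule expect_sum[OF assms, symmetric]) simp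
  also have "\<dots> = expect \<beta> (\<lambda>x. ((x - m) \<bullet> d) *\<^sub>R (x - m)) \<bullet> axis i 1"
    by (rule expect_inner_left[OF assms]) simp
  finally show "(cov \<beta> *v d) $ i = expect \<beta> (\<lambda>x. ((x - ef_mean T lam \<beta>) \<bullet> d) *\<^sub>R (x - ef_mean T lam \<beta>)) $ i"
    by (simp add: m_def inner_axis)
qed

lemma cov_mult_vec_eq_moments:
  assumes "\<beta> \<in> natparams"
  shows "cov \<beta> *v d = expect \<beta> (\<lambda>x. (d \<bullet> x) *\<^sub>R x) - (ef_mean T lam \<beta> \<bullet> d) *\<^sub>R ef_mean T lam \<beta>"
proof -
  define m where "m = ef_mean T lam \<beta>"
  have "((x - m) \<bullet> d) *\<^sub>R (x - m) = ((d \<bullet> x) *\<^sub>R x - (x \<bullet> d) *\<^sub>R m) - ((m \<bullet> d) *\<^sub>R x - (m \<bullet> d) *\<^sub>R m)" for x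
    by (simp add: inner_diff_left scaleR_diff_left scaleR_diff_right inner_commute algebra_simps)
  then have "cov \<beta> *v d = expect \<beta> (\<lambda>x. ((d \<bullet> x) *\<^sub>R x - (x \<bullet> d) *\<^sub>R m) - ((m \<bullet> d) *\<^sub>R x - (m \<bullet> d) *\<^sub>R m))"
    by (simp add: cov_mult_vec[OF assms] m_def)
  also have "\<dots> = expect \<beta> (\<lambda>x. (d \<bullet> x) *\<^sub>R x) - (m \<bullet> d) *\<^sub>R m"
    using assms expect_inner_id[OF assms, of d]
    by (simp add: expect_diff expect_scaleR_left expect_scaleR_right expect_const inner_commute
        ef_mean_eq_expect[symmetric] m_def)
  finally show ?thesis by (simp add: m_def)
qed

lemma has_derivative_ef_Z:
  assumes "\<beta> \<in> natparams"
  shows "(ef_Z T lam has_derivative (\<lambda>d. ef_Z T lam \<beta> * (ef_mean T lam \<beta> \<bullet> d))) (at \<beta>)"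
proof -
  have "((\<lambda>b. \<integral>y. exp (b \<bullet> T y) *\<^sub>R (1::real) \<partial>lam) has_derivative
      (\<lambda>d. \<integral>y. exp (\<beta> \<bullet> T y) *\<^sub>R ((d \<bullet> T y) *\<^sub>R 1) \<partial>lam)) (at \<beta>)"
    using assms by (intro has_derivative_exp_integral) simp_all
  moreover have "(\<integral>y. exp (\<beta> \<bullet> T y) *\<^sub>R ((d \<bullet> T y) *\<^sub>R (1::real)) \<partial>lam) = ef_Z T lam \<beta> * (ef_mean T lam \<beta> \<bullet> d)" for d
    using ef_Z_pos[OF assms] expect_eq_exp_integral[of \<beta> "\<lambda>x. d \<bullet> x"] expect_inner_id[OF assms, of d]
    by simp
  ultimately show ?thesis by (simp add: ef_Z_def[abs_def])
qed

lemma has_derivative_ef_mean: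
  assumes "\<beta> \<in> natparams"
  shows "(ef_mean T lam has_derivative (\<lambda>d. cov \<beta> *v d)) (at \<beta>)"
proof -
  define Z where "Z = ef_Z T lam \<beta>"
  define m where "m = ef_mean T lam \<beta>"
  define N where "N b = (\<integral>y. exp (b \<bullet> T y) *\<^sub>R T y \<partial>lam)" for b
  have Z: "Z > 0" unfolding Z_def using ef_Z_pos[OF assms] .
  have mean_eq: "ef_mean T lam = (\<lambda>b. inverse (ef_Z T lam b) *\<^sub>R N b)"
    by (simp add: fun_eq_iff ef_mean_eq_expect expect_eq_exp_integral N_def divide_inverse)
  have "(N has_derivative (\<lambda>d. \<integral>y. exp (\<beta> \<bullet> T y) *\<^sub>R ((d \<bullet> T y) *\<^sub>R T y) \<partial>lam)) (at \<beta>)"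
    unfolding N_def using has_derivative_exp_integral[OF assms poly_growth_id] by simp
  moreover have "(\<integral>y. exp (\<beta> \<bullet> T y) *\<^sub>R ((d \<bullet> T y) *\<^sub>R T y) \<partial>lam) = Z *\<^sub>R expect \<beta> (\<lambda>x. (d \<bullet> x) *\<^sub>R x)" for d
    using Z by (simp add: expect_eq_exp_integral Z_def)
  ultimately have dN: "(N has_derivative (\<lambda>d. Z *\<^sub>R expect \<beta> (\<lambda>x. (d \<bullet> x) *\<^sub>R x))) (at \<beta>)"
    by simp
  have dInvZ: "((\<lambda>b. inverse (ef_Z T lam b)) has_derivative (\<lambda>d. - (inverse Z * (Z * (m \<bullet> d)) * inverse Z))) (at \<beta>)"
    using has_derivative_compose[OF has_derivative_ef_Z[OF assms] has_derivative_inverse'[of "ef_Z T lam \<beta>"]] Z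
    by (simp add: Z_def m_def)
  have N\<beta>: "N \<beta> = Z *\<^sub>R m"
    using Z mean_eq by (simp add: m_def Z_def fun_eq_iff)
  have "inverse Z *\<^sub>R (Z *\<^sub>R expect \<beta> (\<lambda>x. (d \<bullet> x) *\<^sub>R x)) + (- (inverse Z * (Z * (m \<bullet> d)) * inverse Z)) *\<^sub>R N \<beta>
      = cov \<beta> *v d" for d
    using Z by (simp add: N\<beta> cov_mult_vec_eq_moments[OF assms] m_def)
  then show ?thesis
    using has_derivative_scaleR[OF dInvZ dN] by (simp add: mean_eq Z_def)
qed

lemma cov_pos_def:
  assumes "\<beta> \<in> natparams" "d \<noteq> 0"
  shows "0 < d \<bullet> (cov \<beta> *v d)"
proof -
  define m where "m = ef_mean T lam \<beta>"
  define q where "q y = ef_dens T lam \<beta> y * ((T y - m) \<bullet> d)^2" for y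
  have dens_pos: "ef_dens T lam \<beta> y > 0" for y
    using ef_Z_pos[OF assms(1)] by (simp add: ef_dens_def)
  have "d \<bullet> (cov \<beta> *v d) = expect \<beta> (\<lambda>x. ((x - m) \<bullet> d) *\<^sub>R (x - m)) \<bullet> d"
    unfolding m_def cov_mult_vec[OF assms(1)] by (rule inner_commute)
  also have "\<dots> = expect \<beta> (\<lambda>x. (((x - m) \<bullet> d) *\<^sub>R (x - m)) \<bullet> d)"
    using assms(1) by (intro expect_inner_left[symmetric]) simp_all
  also have "\<dots> = (\<integral>y. q y \<partial>lam)"
    by (simp add: expect_def q_def power2_eq_square)
  finally have eq: "d \<bullet> (cov \<beta> *v d) = (\<integral>y. q y \<partial>lam)" .
  have int: "integrable lam q"
    using integrable_dens_poly_growth[OF assms(1), of "\<lambda>x. ((x - m) \<bullet> d) * ((x - m) \<bullet> d)"]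
    by (simp add: q_def[abs_def] power2_eq_square)
  have nonneg: "AE y in lam. 0 \<le> q y"
    using dens_pos by (simp add: q_def less_imp_le)
  have "(\<integral>y. q y \<partial>lam) \<noteq> 0"
  proof
    assume "(\<integral>y. q y \<partial>lam) = 0"
    then have "AE y in lam. q y = 0"
      using integral_nonneg_eq_0_iff_AE[OF int nonneg] by simp
    then have "AE y in lam. d \<bullet> T y = d \<bullet> m"
    proof (rule eventually_mono)
      fix y assume "q y = 0"
      then have "(T y - m) \<bullet> d = 0" using dens_pos[of y] by (simp add: q_def)
      then show "d \<bullet> T y = d \<bullet> m" by (simp add: inner_diff_left inner_diff_right inner_commute)
    qed
    then show False using lin_indep assms(2) unfolding lin_indep_stats_def by blast
  qed
  moreover have "0 \<le> (\<integral>y. q y \<partial>lam)"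
    using nonneg by (rule integral_nonneg_AE)
  ultimately show ?thesis using eq by simp
qed

lemma pos_def_cov:
  assumes "\<beta> \<in> natparams"
  shows "pos_def (cov \<beta>)"
  using cov_pos_def[OF assms] transpose_cov by (simp add: pos_def_def)

lemma inj_on_ef_mean: "inj_on (ef_mean T lam) natparams"
proof (rule inj_onI, rule ccontr)
  fix a b assume ab: "a \<in> natparams" "b \<in> natparams" "ef_mean T lam a = ef_mean T lam b" "a \<noteq> b"
  define d where "d = b - a"
  have "d \<noteq> 0" using ab(4) by (simp add: d_def)
  define \<phi> where "\<phi> t = ef_mean T lam (a + t *\<^sub>R d) \<bullet> d" for t
  have segment: "a + t *\<^sub>R d \<in> natparams" if "0 \<le> t" "t \<le> 1" for t
    using convexD_alt[OF convex_natparams ab(1,2) that] by (simp add: d_def algebra_simps)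
  have "\<phi> 0 < \<phi> 1"
  proof (rule DERIV_pos_imp_increasing[of 0 1 \<phi>])
    fix t :: real assume t: "0 \<le> t" "t \<le> 1"
    let ?C = "cov (a + t *\<^sub>R d)"
    have "((\<lambda>s. a + s *\<^sub>R d) has_derivative (\<lambda>s. s *\<^sub>R d)) (at t)"
      by (intro derivative_eq_intros) auto
    from has_derivative_compose[OF this has_derivative_ef_mean[OF segment[OF t]]]
    have "(\<phi> has_derivative (\<lambda>s. (?C *v (s *\<^sub>R d)) \<bullet> d)) (at t)"
      unfolding \<phi>_def[abs_def] by (rule has_derivative_inner_left)
    moreover have "(\<lambda>s. (?C *v (s *\<^sub>R d)) \<bullet> d) = (*) (d \<bullet> (?C *v d))"
      by (simp add: fun_eq_iff matrix_vector_mult_scaleR inner_commute)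
    ultimately have "(\<phi> has_real_derivative d \<bullet> (?C *v d)) (at t)"
      by (simp add: has_field_derivative_def)
    then show "\<exists>D. (\<phi> has_real_derivative D) (at t) \<and> 0 < D"
      using cov_pos_def[OF segment[OF t] \<open>d \<noteq> 0\<close>] by blast
  qed simp
  moreover have "\<phi> 0 = \<phi> 1" using ab(3) by (simp add: \<phi>_def d_def)
  ultimately show False by simp
qed

lemma ef_natparam_of_mean:
  assumes "\<beta> \<in> natparams"
  shows "ef_natparam_of T lam (ef_mean T lam \<beta>) = \<beta>"
  unfolding ef_natparam_of_def
  using assms inj_on_ef_mean by (intro the_equality) (auto dest: inj_onD)

lemma ef_natparam_of_meanparam:
  assumes "yh \<in> ef_meanparams T lam"
  shows "ef_natparam_of T lam yh \<in> natparams" "ef_mean T lam (ef_natparam_of T lam yh) = yh"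
  using assms ef_natparam_of_mean unfolding ef_meanparams_def by auto

section \<open>Score and Fisher information\<close>

lemma has_derivative_ef_natparam_of:
  assumes "\<beta> \<in> natparams"
  shows "(ef_natparam_of T lam has_derivative (\<lambda>w. matrix_inv (cov \<beta>) *v w)) (at (ef_mean T lam \<beta>))"
proof (rule has_derivative_inverse_strong[OF open_natparams assms])
  show "continuous_on natparams (ef_mean T lam)"
    using has_derivative_ef_mean
    by (intro has_derivative_continuous_on) (blast intro: has_derivative_at_withinI)
  show "ef_natparam_of T lam (ef_mean T lam x) = x" if "x \<in> natparams" for x
    using ef_natparam_of_mean[OF that] .
  show "(ef_mean T lam has_derivative (\<lambda>d. cov \<beta> *v d)) (at \<beta>)"
    using has_derivative_ef_mean[OF assms] .
  show "(\<lambda>d. cov \<beta> *v d) \<circ> (\<lambda>w. matrix_inv (cov \<beta>) *v w) = id"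
    using matrix_inv_right[OF pos_def_invertible[OF pos_def_cov[OF assms]]]
    by (simp add: fun_eq_iff matrix_vector_mul_assoc)
qed

lemma has_derivative_ln_p_obs_natparam:
  assumes "\<beta> \<in> natparams"
  shows "((\<lambda>yh. ln (p_obs T lam y' yh)) has_derivative
          (\<lambda>w. (T y' - ef_mean T lam \<beta>) \<bullet> (matrix_inv (cov \<beta>) *v w))) (at (ef_mean T lam \<beta>))"
proof -
  define m where "m = ef_mean T lam \<beta>"
  define Ci where "Ci = matrix_inv (cov \<beta>)"
  define g where "g = ef_natparam_of T lam"
  have gm: "g m = \<beta>" unfolding g_def m_def by (rule ef_natparam_of_mean[OF assms])
  have dg: "(g has_derivative (\<lambda>w. Ci *v w)) (at m)"
    unfolding g_def m_def Ci_def by (rule has_derivative_ef_natparam_of[OF assms])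
  have "(\<lambda>d. ef_Z T lam \<beta> * (m \<bullet> d) * inverse (ef_Z T lam \<beta>)) = (\<lambda>d. m \<bullet> d)"
    using ef_Z_pos[OF assms] by (simp add: fun_eq_iff)
  then have "((\<lambda>b. ln (ef_Z T lam b)) has_derivative (\<lambda>d. m \<bullet> d)) (at \<beta>)"
    using has_derivative_ln[OF ef_Z_pos[OF assms] has_derivative_ef_Z[OF assms]] by (simp add: m_def)
  then have "((\<lambda>b. b \<bullet> T y' - ln (ef_Z T lam b)) has_derivative (\<lambda>d. d \<bullet> T y' - m \<bullet> d)) (at (g m))"
    unfolding gm by (rule has_derivative_diff[OF has_derivative_inner_left[OF has_derivative_ident]])
  from has_derivative_compose[OF dg this]
  have dcomp: "((\<lambda>yh. g yh \<bullet> T y' - ln (ef_Z T lam (g yh))) has_derivative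
      (\<lambda>w. (Ci *v w) \<bullet> T y' - m \<bullet> (Ci *v w))) (at m)"
    by (simp only:)
  have "(g \<longlongrightarrow> \<beta>) (at m)"
    using has_derivative_continuous[OF dg] gm by (simp add: continuous_at)
  then have near: "\<forall>\<^sub>F yh in at m. g yh \<in> natparams"
    using topological_tendstoD open_natparams assms by blast
  have ln_p_obs: "ln (p_obs T lam y' yh) = g yh \<bullet> T y' - ln (ef_Z T lam (g yh))" if "g yh \<in> natparams" for yh
    using ef_Z_pos[OF that] by (simp add: p_obs_def ef_dens_def g_def ln_div)
  have "((\<lambda>yh. ln (p_obs T lam y' yh)) has_derivative (\<lambda>w. (Ci *v w) \<bullet> T y' - m \<bullet> (Ci *v w))) (at m)"
  proof (rule has_derivative_transform_eventually[OF dcomp])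
    show "\<forall>\<^sub>F yh in at m. g yh \<bullet> T y' - ln (ef_Z T lam (g yh)) = ln (p_obs T lam y' yh)"
      using near by (rule eventually_mono) (simp add: ln_p_obs)
    show "g m \<bullet> T y' - ln (ef_Z T lam (g m)) = ln (p_obs T lam y' m)"
      using ln_p_obs[of m] gm assms by simp
  qed simp
  moreover have "(\<lambda>w. (Ci *v w) \<bullet> T y' - m \<bullet> (Ci *v w)) = (\<lambda>w. (T y' - m) \<bullet> (Ci *v w))"
    by (simp add: fun_eq_iff inner_diff_left inner_diff_right inner_commute)
  ultimately show ?thesis by (simp add: m_def Ci_def)
qed

lemma ef_cov_mean:
  assumes "\<beta> \<in> natparams"
  shows "ef_cov T lam (ef_mean T lam \<beta>) = cov \<beta>"
  by (simp add: ef_cov_def cov_def expect_def p_obs_def ef_natparam_of_mean[OF assms])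

lemma pos_def_ef_cov:
  assumes "yh \<in> ef_meanparams T lam"
  shows "pos_def (ef_cov T lam yh)"
  using pos_def_cov ef_cov_mean ef_natparam_of_meanparam[OF assms] by metis

lemma has_derivative_ln_p_obs:
  assumes "yh \<in> ef_meanparams T lam"
  shows "((\<lambda>z. ln (p_obs T lam y' z)) has_derivative
          (\<lambda>w. (T y' - yh) \<bullet> (matrix_inv (ef_cov T lam yh) *v w))) (at yh)"
  using has_derivative_ln_p_obs_natparam ef_cov_mean ef_natparam_of_meanparam[OF assms] by metis

lemma grad_ln_p_obs_comp:
  assumes yh: "yh \<in> ef_meanparams T lam" and hf: "hf differentiable (at x0)" "hf x0 = yh"
  shows "grad (\<lambda>x. ln (p_obs T lam y' (hf x))) x0
       = (T y' - yh) v* (matrix_inv (ef_cov T lam yh) ** jacobian hf x0)"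
proof -
  define D where "D = frechet_derivative hf (at x0)"
  define Ci where "Ci = matrix_inv (ef_cov T lam yh)"
  have dhf: "(hf has_derivative D) (at x0)"
    using hf(1) frechet_derivative_works D_def by blast
  have D: "D v = jacobian hf x0 *v v" for v
    using fun_cong[OF matrix_vector_mul(2)[OF has_derivative_linear[OF dhf]], of v]
    by (simp add: jacobian_def D_def)
  have "((\<lambda>x. ln (p_obs T lam y' (hf x))) has_derivative (\<lambda>v. (T y' - yh) \<bullet> (Ci *v D v))) (at x0)"
    using has_derivative_compose[OF dhf has_derivative_ln_p_obs[OF yh, of y', folded hf(2)]]
    by (simp add: Ci_def hf(2))
  then have "frechet_derivative (\<lambda>x. ln (p_obs T lam y' (hf x))) (at x0) = (\<lambda>v. (T y' - yh) \<bullet> (Ci *v D v))"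
    by (rule frechet_derivative_at[symmetric])
  then show ?thesis
    by (simp add: grad_def vec_eq_iff D dot_lmul_matrix[symmetric] vector_matrix_mul_assoc inner_axis Ci_def)
qed

lemma cov_congruence:
  fixes A :: "real^'n^'m"
  assumes "\<beta> \<in> natparams"
  shows "(\<chi> i j. expect \<beta> (\<lambda>x. ((x - ef_mean T lam \<beta>) v* A) $ i * ((x - ef_mean T lam \<beta>) v* A) $ j))
       = transpose A ** cov \<beta> ** A"
proof (subst vec_eq_iff, intro allI, subst vec_eq_iff, intro allI)
  fix i j
  define m where "m = ef_mean T lam \<beta>"
  have "((x - m) v* A) $ i * ((x - m) v* A) $ j
      = (\<Sum>k\<in>UNIV. \<Sum>l\<in>UNIV. (A$k$i * A$l$j) *\<^sub>R ((x$k - m$k) * (x$l - m$l)))" for x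
    by (simp add: vector_matrix_mult_def sum_product mult_ac)
  then have "expect \<beta> (\<lambda>x. ((x - m) v* A) $ i * ((x - m) v* A) $ j)
      = (\<Sum>k\<in>UNIV. \<Sum>l\<in>UNIV. (A$k$i * A$l$j) * cov \<beta> $ k $ l)"
    using assms by (simp add: expect_sum expect_mult_left cov_def m_def)
  also have "\<dots> = (transpose A ** cov \<beta> ** A) $ i $ j"
    by (simp add: matrix_matrix_mult_def transpose_def sum_distrib_left sum_distrib_right mult_ac)
      (subst sum.swap, simp add: mult_ac)
  finally show "(\<chi> i j. expect \<beta> (\<lambda>x. ((x - ef_mean T lam \<beta>) v* A) $ i * ((x - ef_mean T lam \<beta>) v* A) $ j)) $ i $ j
      = (transpose A ** cov \<beta> ** A) $ i $ j" by (simp add: m_def)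
qed

lemma fisher_information_comp:
  assumes yh: "yh \<in> ef_meanparams T lam" and hf: "hf differentiable (at x0)" "hf x0 = yh"
  shows "(\<chi> i j. \<integral>y'. p_obs T lam y' yh * (outer_sq (grad (\<lambda>x. ln (p_obs T lam y' (hf x))) x0) $ i $ j) \<partial>lam)
       = transpose (jacobian hf x0) ** matrix_inv (ef_cov T lam yh) ** jacobian hf x0"
proof -
  define \<beta> where "\<beta> = ef_natparam_of T lam yh"
  have \<beta>: "\<beta> \<in> natparams" "ef_mean T lam \<beta> = yh"
    using ef_natparam_of_meanparam[OF yh] by (simp_all add: \<beta>_def)
  define Ci where "Ci = matrix_inv (cov \<beta>)"
  define A where "A = Ci ** jacobian hf x0"
  have Ci: "transpose Ci = Ci" "cov \<beta> ** Ci = mat 1"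
    using transpose_matrix_inv_symmetric[OF transpose_cov] matrix_inv_right
      pos_def_invertible[OF pos_def_cov[OF \<beta>(1)]] by (auto simp: Ci_def)
  have cov_yh: "ef_cov T lam yh = cov \<beta>" using ef_cov_mean[OF \<beta>(1)] \<beta>(2) by simp
  have p_obs_yh: "p_obs T lam y yh = ef_dens T lam \<beta> y" for y by (simp add: p_obs_def \<beta>_def)
  have "(\<chi> i j. \<integral>y'. p_obs T lam y' yh * (outer_sq (grad (\<lambda>x. ln (p_obs T lam y' (hf x))) x0) $ i $ j) \<partial>lam)
      = (\<chi> i j. expect \<beta> (\<lambda>x. ((x - yh) v* A) $ i * ((x - yh) v* A) $ j))"
    by (simp add: grad_ln_p_obs_comp[OF yh hf] cov_yh A_def Ci_def outer_sq_def expect_def p_obs_yh)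
  also have "\<dots> = transpose A ** cov \<beta> ** A"
    using cov_congruence[OF \<beta>(1)] \<beta>(2) by simp
  also have "\<dots> = transpose (jacobian hf x0) ** (transpose Ci ** cov \<beta> ** Ci) ** jacobian hf x0"
    by (simp add: A_def matrix_transpose_mul matrix_mul_assoc)
  also have "transpose Ci ** cov \<beta> ** Ci = Ci"
    using Ci by (simp flip: matrix_mul_assoc)
  finally show ?thesis by (simp add: Ci_def cov_yh)
qed

lemma ekf_alt_Suc_eq_ekf_Suc:
  assumes ekf_t: "ekf f h T lam Q u y s0 P0 t = (s, P)"
    and alt_t: "ekf_alt f h T lam Q u y s0 P0 t = (s, P)"
    and P: "psd_cov P" and Q: "psd_cov (Q (Suc t))"
    and h_diff: "(\<lambda>x. h x (u (Suc t))) differentiable (at (ekf_pred_state f u s (Suc t)))"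
    and yh_mean: "ekf_yhat f h u s (Suc t) \<in> ef_meanparams T lam"
    and Pp_inv: "invertible (ekf_pred_cov f Q u s P (Suc t))"
  shows "ekf_alt f h T lam Q u y s0 P0 (Suc t) = ekf f h T lam Q u y s0 P0 (Suc t)"
    and "psd_cov (snd (ekf f h T lam Q u y s0 P0 (Suc t)))"
proof -
  define sp where "sp = ekf_pred_state f u s (Suc t)"
  define Pp where "Pp = ekf_pred_cov f Q u s P (Suc t)"
  define hf where "hf = (\<lambda>x. h x (u (Suc t)))"
  define yh where "yh = hf sp"
  define H where "H = jacobian hf sp"
  define R where "R = ef_cov T lam yh"
  define K where "K = Pp ** transpose H ** matrix_inv (H ** Pp ** transpose H + R)"
  define e where "e = T (y (Suc t)) - yh"
  have yh: "yh \<in> ef_meanparams T lam" using yh_mean by (simp add: yh_def hf_def sp_def ekf_yhat_def)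
  have hf: "hf differentiable (at sp)" using h_diff by (simp add: hf_def sp_def)
  have Pp: "psd_cov Pp" "invertible Pp"
    using psd_cov_add[OF psd_cov_congruence[OF P, of "transpose (jacobian (\<lambda>x. f x (u (Suc t))) s)"] Q] Pp_inv
    by (simp_all add: Pp_def ekf_pred_cov_def Let_def)
  have R: "pos_def R" using pos_def_ef_cov[OF yh] by (simp add: R_def)
  note info = kalman_information_form[OF Pp R, of H, folded K_def]
  have "transpose (matrix_inv R) = matrix_inv R"
    using R by (simp add: transpose_matrix_inv_symmetric pos_def_invertible pos_def_def)
  then have score: "e v* (matrix_inv R ** H) = (transpose H ** matrix_inv R) *v e"
    by (metis matrix_transpose_mul transpose_matrix_vector)
  have ekf_eq: "ekf f h T lam Q u y s0 P0 (Suc t) = (sp + K *v e, (mat 1 - K ** H) ** Pp)"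
    by (simp add: ekf_t Let_def sp_def Pp_def hf_def yh_def H_def R_def K_def e_def)
  have "ekf_alt f h T lam Q u y s0 P0 (Suc t)
      = (sp + matrix_inv (matrix_inv Pp + transpose H ** matrix_inv R ** H) *v (e v* (matrix_inv R ** H)),
         matrix_inv (matrix_inv Pp + transpose H ** matrix_inv R ** H))"
    using grad_ln_p_obs_comp[OF yh hf] fisher_information_comp[OF yh hf]
    by (simp add: alt_t Let_def sp_def Pp_def hf_def yh_def H_def R_def e_def)
  also have "\<dots> = (sp + ((mat 1 - K ** H) ** Pp) *v ((transpose H ** matrix_inv R) *v e), (mat 1 - K ** H) ** Pp)"
    by (simp only: info(1) score)
  also have "((mat 1 - K ** H) ** Pp) *v ((transpose H ** matrix_inv R) *v e) = K *v e"
    using arg_cong[OF info(2), of "\<lambda>A. A *v e"] by (simp add: matrix_vector_mul_assoc matrix_mul_assoc)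
  finally show "ekf_alt f h T lam Q u y s0 P0 (Suc t) = ekf f h T lam Q u y s0 P0 (Suc t)"
    using ekf_eq by simp
  show "psd_cov (snd (ekf f h T lam Q u y s0 P0 (Suc t)))"
    using ekf_eq info(3) by simp
qed

end

theorem corollary13:
  fixes f :: "real^'n \<Rightarrow> 'u \<Rightarrow> real^'n" and h :: "real^'n \<Rightarrow> 'u \<Rightarrow> real^'m"
    and T :: "'y \<Rightarrow> real^'m" and lam :: "'y measure"
    and Q :: "nat \<Rightarrow> real^'n^'n" and u :: "nat \<Rightarrow> 'u" and y :: "nat \<Rightarrow> 'y"
    and s0 :: "real^'n" and P0 :: "real^'n^'n"
  assumes fam: "exp_family T lam"
    and f_diff: "\<forall>v x. (\<lambda>s. f s v) differentiable (at x)"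
    and h_diff: "\<forall>v x. (\<lambda>s. h s v) differentiable (at x)"
    and P0_cov: "psd_cov P0"
    and Q_cov: "\<forall>t. psd_cov (Q t)"
    and yhat_valid: "\<forall>t. case ekf f h T lam Q u y s0 P0 t of (s, P) \<Rightarrow>
                        ekf_yhat f h u s (Suc t) \<in> ef_meanparams T lam"
    and Pp_inv: "\<forall>t. case ekf f h T lam Q u y s0 P0 t of (s, P) \<Rightarrow>
                        invertible (ekf_pred_cov f Q u s P (Suc t))"
    and R_inv: "\<forall>t. case ekf f h T lam Q u y s0 P0 t of (s, P) \<Rightarrow>
                        invertible (ef_cov T lam (ekf_yhat f h u s (Suc t)))"
  shows "\<forall>t. ekf_alt f h T lam Q u y s0 P0 t = ekf f h T lam Q u y s0 P0 t"
proof -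
  interpret exponential_family T lam using fam by unfold_locales
  have "ekf_alt f h T lam Q u y s0 P0 t = ekf f h T lam Q u y s0 P0 t
      \<and> psd_cov (snd (ekf f h T lam Q u y s0 P0 t))" for t
  proof (induction t)
    case 0
    then show ?case using P0_cov by simp
  next
    case (Suc t)
    obtain s P where sP: "ekf f h T lam Q u y s0 P0 t = (s, P)" by fastforce
    then show ?case
      using ekf_alt_Suc_eq_ekf_Suc[OF sP _ _ Q_cov[rule_format]] Suc.IH h_diff
        yhat_valid[rule_format, of t] Pp_inv[rule_format, of t] by simp
  qed
  then show ?thesis by blast
qed

end
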